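(* For every polytope $P$ and every instance $S=((s_1,d_1),\dots,(s_n,d_n))$, letting $m=\max_{t\le T}|\{i:s_i\le t\le d_i\}|$, we have $OPT_A(S;P)=Disp(m;P)$.
   Context: Distances are Euclidean; $\partial P$ is the boundary of $P$. $Disp(n;P)=\max_{X_1,\dots,X_n\in P}\min\{dis(X_i,\partial P),dis(X_i,X_j):i\ne j\}$. An instance has $s_i<d_i$, $0=s_1\le\dots\le s_n$; point $i$ is present at time $t$ iff $s_i\le t\le d_i$; $T=\max_id_i$. For $X\in P^n$, $d_{min}(t;X)=\min\{dis(X_i,\partial P),dis(X_i,X_j)\}$ over present points $i\ne j$ at time $t$, and $OPT_A(S;P)=\max_X\min_{t\le T}d_{min}(t;X)$. *)

theory Defs
  imports "HOL-Analysis.Analysis"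
begin

(* Points are indexed 0..n-1 (paper: 1..n). *)

definition dmin_set :: "'a::euclidean_space set \<Rightarrow> nat set \<Rightarrow> (nat \<Rightarrow> 'a) \<Rightarrow> real" where
  "dmin_set P I X = Inf ({infdist (X i) (frontier P) | i. i \<in> I}
                        \<union> {dist (X i) (X j) | i j. i \<in> I \<and> j \<in> I \<and> i \<noteq> j})"

definition Disp :: "nat \<Rightarrow> 'a::euclidean_space set \<Rightarrow> real" where
  "Disp n P = Sup ((\<lambda>X. dmin_set P {..<n} X) ` {X. \<forall>i<n. X i \<in> P})"

definition present :: "nat \<Rightarrow> (nat \<Rightarrow> real) \<Rightarrow> (nat \<Rightarrow> real) \<Rightarrow> real \<Rightarrow> nat set" where
  "present n s d t = {i. i < n \<and> s i \<le> t \<and> t \<le> d i}"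

definition horizon :: "nat \<Rightarrow> (nat \<Rightarrow> real) \<Rightarrow> real" where
  "horizon n d = Max (d ` {..<n})"

text \<open>min over t \<le> T of d_min(t;X); times with no present point impose no constraint.\<close>
definition OPT_A :: "nat \<Rightarrow> (nat \<Rightarrow> real) \<Rightarrow> (nat \<Rightarrow> real) \<Rightarrow> 'a::euclidean_space set \<Rightarrow> real" where
  "OPT_A n s d P = Sup ((\<lambda>X. Inf ((\<lambda>t. dmin_set P (present n s d t) X)
        ` {t. t \<le> horizon n d \<and> present n s d t \<noteq> {}})) ` {X. \<forall>i<n. X i \<in> P})"

definition max_present :: "nat \<Rightarrow> (nat \<Rightarrow> real) \<Rightarrow> (nat \<Rightarrow> real) \<Rightarrow> nat" where
  "max_present n s d = Max ((\<lambda>t. card (present n s d t)) ` {t. t \<le> horizon n d})"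

end

theory Submission
  imports Defs
begin

text \<open>Points that are never present together may share a location. Colour the interval graph
  of the instance greedily in order of start times: when interval \<open>k\<close> starts, every earlier
  interval overlapping it is still present at \<open>s k\<close>, so fewer than \<open>m\<close> colours are blocked.
  Placing each point at the location of its colour in an optimal dispersion of \<open>m\<close> points
  keeps the present points pairwise distinct at all times, so the instance achieves
  \<open>Disp m P\<close>. Conversely, at a time when \<open>m\<close> points are present they form a placement of
  \<open>m\<close> points, so no placement does better.\<close>

lemma dmin_set_le_infdist: "i \<in> I \<Longrightarrow> dmin_set P I X \<le> infdist (X i) (frontier P)"
  unfolding dmin_set_def by (rule cInf_lower) (auto intro: bdd_belowI[of _ 0] simp: infdist_nonneg)

lemma dmin_set_le_dist:
  "i \<in> I \<Longrightarrow> j \<in> I \<Longrightarrow> i \<noteq> j \<Longrightarrow> dmin_set P I X \<le> dist (X i) (X j)"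
  unfolding dmin_set_def by (rule cInf_lower) (auto intro: bdd_belowI[of _ 0] simp: infdist_nonneg)

lemma dmin_set_greatest:
  assumes "I \<noteq> {}" "\<And>i. i \<in> I \<Longrightarrow> c \<le> infdist (X i) (frontier P)"
    "\<And>i j. i \<in> I \<Longrightarrow> j \<in> I \<Longrightarrow> i \<noteq> j \<Longrightarrow> c \<le> dist (X i) (X j)"
  shows "c \<le> dmin_set P I X"
  unfolding dmin_set_def by (rule cInf_greatest) (use assms in auto)

lemma dmin_set_nonneg: "I \<noteq> {} \<Longrightarrow> 0 \<le> dmin_set P I X"
  by (rule dmin_set_greatest) (auto simp: infdist_nonneg)

lemma dmin_set_le_reindex:
  assumes "J \<noteq> {}" "e ` J \<subseteq> I" "inj_on e J"
  shows "dmin_set P I X \<le> dmin_set P J (X \<circ> e)"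
  using assms
  by (intro dmin_set_greatest) (auto intro!: dmin_set_le_infdist dmin_set_le_dist dest: inj_onD)

lemma infdist_frontier_le_diameter:
  fixes P :: "'a::metric_space set"
  assumes "bounded P" "x \<in> P"
  shows "infdist x (frontier P) \<le> diameter P"
proof (cases "frontier P = {}")
  case True
  then show ?thesis using assms by (simp add: infdist_def diameter_ge_0)
next
  case False
  then obtain y where y: "y \<in> frontier P" by blast
  have "infdist x (frontier P) \<le> dist x y" using y by (rule infdist_le)
  also have "\<dots> \<le> diameter (closure P)"
    using assms y closure_subset[of P]
    by (intro diameter_bounded_bound) (auto simp: frontier_def)
  also have "\<dots> = diameter P" using assms(1) by (rule diameter_closure)
  finally show ?thesis .
qed

lemma bdd_above_dispersions:
  assumes "bounded P"
  shows "bdd_above ((\<lambda>X. dmin_set P {..<m} X) ` {X. \<forall>i<m. X i \<in> P})"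
proof (cases "m = 0")
  case True
  then show ?thesis by (simp add: dmin_set_def)
next
  case False
  show ?thesis
  proof (rule bdd_aboveI2)
    fix X assume "X \<in> {X. \<forall>i<m. X i \<in> P}"
    then have "X 0 \<in> P" using False by simp
    have "dmin_set P {..<m} X \<le> infdist (X 0) (frontier P)"
      using False by (intro dmin_set_le_infdist) simp
    also have "\<dots> \<le> diameter P" using assms \<open>X 0 \<in> P\<close> by (rule infdist_frontier_le_diameter)
    finally show "dmin_set P {..<m} X \<le> diameter P" .
  qed
qed

lemma cSup_image_eq_if_dominated:
  fixes f :: "'a \<Rightarrow> real" and g :: "'b \<Rightarrow> real"
  assumes "bdd_above (g ` B)"
    and f_dom: "\<And>x. x \<in> A \<Longrightarrow> \<exists>y\<in>B. f x \<le> g y"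
    and g_dom: "\<And>y. y \<in> B \<Longrightarrow> \<exists>x\<in>A. g y \<le> f x"
  shows "Sup (f ` A) = Sup (g ` B)"
proof (cases "B = {}")
  case True
  then have "A = {}" using f_dom by blast
  with True show ?thesis by simp
next
  case False
  then have "A \<noteq> {}" using g_dom by blast
  have f_le: "f x \<le> Sup (g ` B)" if "x \<in> A" for x
    using f_dom[OF that] assms(1) by (meson cSup_upper imageI order_trans)
  then have "bdd_above (f ` A)" by (rule bdd_aboveI2)
  have g_le: "g y \<le> Sup (f ` A)" if "y \<in> B" for y
    using g_dom[OF that] \<open>bdd_above (f ` A)\<close> by (meson cSup_upper imageI order_trans)
  have "Sup (f ` A) \<le> Sup (g ` B)"
    using \<open>A \<noteq> {}\<close> f_le by (auto intro: cSup_least)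
  moreover have "Sup (g ` B) \<le> Sup (f ` A)"
    using False g_le by (auto intro: cSup_least)
  ultimately show ?thesis by simp
qed

lemma present_subset: "present n s d t \<subseteq> {..<n}"
  by (auto simp: present_def)

lemma finite_present [simp]: "finite (present n s d t)"
  using finite_subset[OF present_subset] by simp

lemma card_present_le: "card (present n s d t) \<le> n"
  using card_mono[OF finite_lessThan present_subset] by simp

lemma finite_card_present_image: "finite ((\<lambda>t. card (present n s d t)) ` T)"
  by (rule finite_subset[of _ "{..n}"]) (auto intro: card_present_le)

lemma card_present_le_max_present:
  "t \<le> horizon n d \<Longrightarrow> card (present n s d t) \<le> max_present n s d"
  unfolding max_present_def by (intro Max_ge finite_card_present_image) auto

lemma max_present_attained: "\<exists>t \<le> horizon n d. card (present n s d t) = max_present n s d"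
proof -
  have "max_present n s d \<in> (\<lambda>t. card (present n s d t)) ` {t. t \<le> horizon n d}"
    unfolding max_present_def by (intro Max_in finite_card_present_image) auto
  then show ?thesis by auto
qed

lemma le_horizon: "i < n \<Longrightarrow> d i \<le> horizon n d"
  unfolding horizon_def by (intro Max_ge) auto

lemma present_at_start:
  assumes "\<forall>i j. i \<le> j \<and> j < n \<longrightarrow> s i \<le> s j" "\<forall>i<n. s i \<le> d i"
    and "j < k" "k < n" "j \<in> present n s d t" "k \<in> present n s d t"
  shows "j \<in> present n s d (s k)"
  using assms by (force simp: present_def)

lemma interval_colouring:
  assumes sorted: "\<forall>i j. i \<le> j \<and> j < n \<longrightarrow> s i \<le> s j" and "\<forall>i<n. s i \<le> d i"
    and at_starts: "\<forall>k<n. card (present n s d (s k)) \<le> m"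
  shows "\<exists>c. (\<forall>i<n. c i < m) \<and> (\<forall>t. inj_on c (present n s d t))"
proof -
  have "\<exists>c. (\<forall>i<k. c i < m) \<and> (\<forall>t. inj_on c (present n s d t \<inter> {..<k}))" if "k \<le> n" for k
    using that
  proof (induction k)
    case 0
    then show ?case by auto
  next
    case (Suc k)
    then obtain c where c_range: "\<forall>i<k. c i < m"
      and c_inj: "\<forall>t. inj_on c (present n s d t \<inter> {..<k})" by auto
    define J where "J = present n s d (s k) \<inter> {..<k}"
    have "k \<in> present n s d (s k)" using Suc.prems assms(2) by (simp add: present_def)
    then have "insert k J \<subseteq> present n s d (s k)" by (auto simp: J_def)
    then have "card (insert k J) \<le> m"
      using at_starts Suc.prems by (meson Suc_le_lessD card_mono finite_present order_trans)
    then have "card (c ` J) < m"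
      using card_image_le[of J c] by (simp add: J_def)
    then obtain col where col: "col < m" "col \<notin> c ` J"
      using card_mono[of "c ` J" "{..<m}"] by (force simp: J_def)
    have overlap_in_J: "j \<in> J" if "j \<in> present n s d t" "k \<in> present n s d t" "j < k" for j t
      using present_at_start[OF sorted assms(2) \<open>j < k\<close> _ that(1,2)] Suc.prems \<open>j < k\<close>
      by (simp add: J_def)
    have "inj_on (c(k := col)) (present n s d t \<inter> {..<Suc k})" for t
      using c_inj col overlap_in_J
      unfolding inj_on_def by (auto simp: less_Suc_eq)
    moreover have "\<forall>i<Suc k. (c(k := col)) i < m" using c_range col by (simp add: less_Suc_eq)
    ultimately show ?case by blast
  qed
  from this[of n] show ?thesis using present_subset by (simp add: Int_absorb2)
qed

definition dmin_over_time ::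
    "nat \<Rightarrow> (nat \<Rightarrow> real) \<Rightarrow> (nat \<Rightarrow> real) \<Rightarrow> 'a::euclidean_space set \<Rightarrow> (nat \<Rightarrow> 'a) \<Rightarrow> real"
  where
  "dmin_over_time n s d P X = Inf ((\<lambda>t. dmin_set P (present n s d t) X)
     ` {t. t \<le> horizon n d \<and> present n s d t \<noteq> {}})"

lemma OPT_A_eq_Sup_dmin_over_time:
  "OPT_A n s d P = Sup (dmin_over_time n s d P ` {X. \<forall>i<n. X i \<in> P})"
  by (simp add: OPT_A_def dmin_over_time_def)

lemma dmin_over_time_le:
  assumes "t \<le> horizon n d" "present n s d t \<noteq> {}"
  shows "dmin_over_time n s d P X \<le> dmin_set P (present n s d t) X"
  unfolding dmin_over_time_def using assms
  by (intro cInf_lower) (auto intro!: bdd_belowI[of _ 0] dmin_set_nonneg)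

lemma dmin_over_time_dominated_by_dispersion:
  assumes "t \<le> horizon n d" "card (present n s d t) = m" "0 < m" "\<forall>i<n. X i \<in> P"
  shows "\<exists>Y\<in>{Y. \<forall>i<m. Y i \<in> P}. dmin_over_time n s d P X \<le> dmin_set P {..<m} Y"
proof -
  obtain e where e: "inj_on e {..<m}" "e ` {..<m} = present n s d t"
    using ex_bij_betw_nat_finite[of "present n s d t"] assms(2)
    by (auto simp: atLeast0LessThan bij_betw_def)
  have "dmin_over_time n s d P X \<le> dmin_set P (present n s d t) X"
    using assms by (intro dmin_over_time_le) auto
  also have "\<dots> \<le> dmin_set P {..<m} (X \<circ> e)"
    using e assms(3) by (intro dmin_set_le_reindex) (auto simp: lessThan_empty_iff)
  finally have "dmin_over_time n s d P X \<le> dmin_set P {..<m} (X \<circ> e)" .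
  moreover have "X \<circ> e \<in> {Y. \<forall>i<m. Y i \<in> P}" using assms(4) e present_subset by force
  ultimately show ?thesis by blast
qed

lemma dispersion_dominated_by_dmin_over_time:
  assumes "\<forall>i<n. c i < m" "\<And>t. inj_on c (present n s d t)"
    and "t \<le> horizon n d" "present n s d t \<noteq> {}" "\<forall>i<m. Y i \<in> P"
  shows "\<exists>X\<in>{X. \<forall>i<n. X i \<in> P}. dmin_set P {..<m} Y \<le> dmin_over_time n s d P X"
proof -
  have "dmin_set P {..<m} Y \<le> dmin_over_time n s d P (Y \<circ> c)"
    unfolding dmin_over_time_def using assms(1-4) present_subset[of n s d]
    by (intro cInf_greatest) (force, auto intro!: dmin_set_le_reindex)
  moreover have "\<forall>i<n. (Y \<circ> c) i \<in> P" using assms(1,5) by simp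
  ultimately show ?thesis by blast
qed

theorem claim2:
  fixes P :: "'a::euclidean_space set" and n :: nat and s d :: "nat \<Rightarrow> real"
  assumes "polytope P"
    and "n \<ge> 1"
    and "\<forall>i<n. s i < d i"
    and "s 0 = 0"
    and "\<forall>i j. i \<le> j \<and> j < n \<longrightarrow> s i \<le> s j"
  shows "OPT_A n s d P = Disp (max_present n s d) P"
proof -
  define m where "m = max_present n s d"
  have sd: "\<forall>i<n. s i \<le> d i" using assms(3) by (simp add: less_imp_le)
  then have "\<forall>k<n. card (present n s d (s k)) \<le> m"
    unfolding m_def by (meson card_present_le_max_present le_horizon order_trans)
  then obtain c where c: "\<forall>i<n. c i < m" "\<And>t. inj_on c (present n s d t)"
    using interval_colouring[OF assms(5) sd] by blast
  have "0 \<in> present n s d 0" "0 \<le> horizon n d"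
    using assms(2-4) le_horizon[of 0 n d] by (auto simp: present_def)
  then have "0 < card (present n s d 0)" "card (present n s d 0) \<le> m"
    unfolding m_def by (auto simp: card_gt_0_iff intro: card_present_le_max_present)
  then have "0 < m" by linarith
  obtain t\<^sub>0 where t\<^sub>0: "t\<^sub>0 \<le> horizon n d" "card (present n s d t\<^sub>0) = m"
    using max_present_attained unfolding m_def by blast
  then have "present n s d t\<^sub>0 \<noteq> {}" using \<open>0 < m\<close> by auto
  show ?thesis
    unfolding OPT_A_eq_Sup_dmin_over_time Disp_def m_def[symmetric]
    using dmin_over_time_dominated_by_dispersion[OF t\<^sub>0 \<open>0 < m\<close>]
      dispersion_dominated_by_dmin_over_time[OF c t\<^sub>0(1) \<open>present n s d t\<^sub>0 \<noteq> {}\<close>]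
    by (intro cSup_image_eq_if_dominated bdd_above_dispersions polytope_imp_bounded assms(1)) simp_all
qed

end
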